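(* Let $Q\ge1$ and $\Omega_Q=\{(x,y)\in\mathbb R^2:\ x>0,\ y>0,\ xy\le Q\}$. Let $\mathcal B(x,y)=128Q^{3/2}(xy)^{1/2}-(xy)^2$ and, for $X_0\in\Omega_Q$, $\mathcal B_{X_0}(X)=\mathcal B(X)-\mathcal B'(X_0)(X-X_0)$, where $\mathcal B'(X_0)$ is the gradient of $\mathcal B$ at $X_0$. Then (1) $0\le\mathcal B(X)\le 128Q^2$ for all $X\in\Omega_Q$; (2) for all $X_0=(x_0,y_0)$, $X=(x,y)$ in $\Omega_Q$, $$\mathcal B_{X_0}(X_0)-\mathcal B_{X_0}(X)\ge c\,|x-x_0|^2\,y\,y_0,$$ where $c$ is an absolute constant. *)

theory Defs
  imports "HOL-Analysis.Analysis"
begin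

definition OmegaQ :: "real \<Rightarrow> (real \<times> real) set" where
  "OmegaQ Q = {(x, y). x > 0 \<and> y > 0 \<and> x * y \<le> Q}"

definition BQ :: "real \<Rightarrow> real \<times> real \<Rightarrow> real" where
  "BQ Q X = 128 * Q powr (3/2) * sqrt (fst X * snd X) - (fst X * snd X)^2"

definition BQ_at :: "real \<Rightarrow> real \<times> real \<Rightarrow> real \<times> real \<Rightarrow> real" where
  "BQ_at Q X0 X = BQ Q X - frechet_derivative (BQ Q) (at X0) (X - X0)"

end

theory Submission
  imports Defs
begin

text \<open>
  Everything depends on X = (x, y) only through u = sqrt (x y): with K = Q powr (3/2) and
  \<phi>(u) = 128 K u - u^4 we have B = \<phi>(u), and u \<le> sqrt Q on Omega_Q gives part (1).
  For part (2) write x = p^2, y = q^2 and v = sqrt (x0 y0). The gradient of B at X0 is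
  G (y0, x0) with G = \<phi>'(v) / (2 v), and since y0 x + x0 y = (p q0 - p0 q)^2 + 2 v u the
  gap B_X0(X0) - B_X0(X) splits exactly as G (p q0 - p0 q)^2 plus the tangent gap of the
  convex function u^4 at v. Both terms are nonnegative, and since
  (x - x0) sqrt (y y0) = (p q0) u - (p0 q) v, an elementary estimate using G \<ge> Q and
  u^2, v^2 \<le> Q bounds (x - x0)^2 y y0 by ten times their sum.
\<close>

lemma powr_three_halves: "0 \<le> Q \<Longrightarrow> Q powr (3/2) = sqrt Q ^ 3"
proof -
  assume "0 \<le> Q"
  have "Q powr (3/2) = Q powr (1 + 1/2)"
    by simp
  also have "\<dots> = Q powr 1 * Q powr (1/2)"
    by (rule powr_add)
  also have "\<dots> = Q * sqrt Q"
    using \<open>0 \<le> Q\<close> by (simp add: powr_half_sqrt)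
  finally show ?thesis
    using \<open>0 \<le> Q\<close> by (simp add: power3_eq_cube)
qed

lemma BQ_sqrt_form:
  assumes "0 \<le> fst X * snd X"
  shows "BQ Q X = 128 * Q powr (3/2) * sqrt (fst X * snd X) - sqrt (fst X * snd X) ^ 4"
proof -
  have "sqrt (fst X * snd X) ^ 4 = (sqrt (fst X * snd X) ^ 2) ^ 2"
    by (simp flip: power_mult)
  also have "\<dots> = (fst X * snd X)^2"
    using assms by simp
  finally have "sqrt (fst X * snd X) ^ 4 = (fst X * snd X)^2" .
  then show ?thesis
    by (simp add: BQ_def)
qed

lemma OmegaQ_product_bounds:
  assumes "X \<in> OmegaQ Q"
  shows "0 < fst X * snd X" "fst X * snd X \<le> Q"
  using assms by (auto simp: OmegaQ_def)

lemma OmegaQ_sqrt_bounds: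
  assumes "X \<in> OmegaQ Q"
  shows "0 < sqrt (fst X * snd X)" "sqrt (fst X * snd X) \<le> sqrt Q"
  using OmegaQ_product_bounds[OF assms] by simp_all

lemma BQ_nonneg:
  assumes "X \<in> OmegaQ Q"
  shows "0 \<le> BQ Q X"
proof -
  define u where "u = sqrt (fst X * snd X)"
  define w where "w = sqrt Q"
  have u: "0 < u" "u \<le> w"
    using OmegaQ_sqrt_bounds[OF assms] by (simp_all add: u_def w_def)
  have "u ^ 4 = u * u ^ 3"
    by (simp add: power_numeral_reduce)
  also have "\<dots> \<le> u * w ^ 3"
    using u by (intro mult_left_mono power_mono) auto
  also have "\<dots> \<le> 128 * w ^ 3 * u"
    using u by simp
  finally have "u ^ 4 \<le> 128 * w ^ 3 * u" .
  moreover have "0 \<le> Q" "0 \<le> fst X * snd X"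
    using OmegaQ_product_bounds[OF assms] by linarith+
  ultimately show ?thesis
    by (simp add: BQ_sqrt_form powr_three_halves u_def w_def)
qed

lemma BQ_le:
  assumes "X \<in> OmegaQ Q"
  shows "BQ Q X \<le> 128 * Q^2"
proof -
  define u where "u = sqrt (fst X * snd X)"
  define w where "w = sqrt Q"
  have u: "0 < u" "u \<le> w"
    using OmegaQ_sqrt_bounds[OF assms] by (simp_all add: u_def w_def)
  have Q: "0 \<le> Q" "0 \<le> fst X * snd X"
    using OmegaQ_product_bounds[OF assms] by linarith+
  have "128 * w ^ 3 * u \<le> 128 * w ^ 3 * w"
    using u by simp
  also have "\<dots> = 128 * Q^2"
    using Q by (simp add: w_def power_numeral_reduce)
  finally have "128 * w ^ 3 * u - u ^ 4 \<le> 128 * Q^2"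
    using zero_le_power[of u 4] u(1) by linarith
  then show ?thesis
    using Q by (simp add: BQ_sqrt_form powr_three_halves u_def w_def)
qed

lemma has_derivative_BQ:
  assumes "0 < fst X0 * snd X0"
  shows "(BQ Q has_derivative
           (\<lambda>h. (64 * Q powr (3/2) / sqrt (fst X0 * snd X0) - 2 * (fst X0 * snd X0))
                 * (snd X0 * fst h + fst X0 * snd h))) (at X0)"
proof -
  have prod: "((\<lambda>X. fst X * snd X) has_derivative (\<lambda>h. fst X0 * snd h + fst h * snd X0)) (at X0)"
    by (intro derivative_eq_intros) auto
  have "fst X0 * snd X0 \<noteq> 0"
    using assms by linarith
  note sqrt_prod = has_derivative_real_sqrt[OF assms prod]
  note square_prod = has_derivative_power[OF prod, of 2]
  show ?thesis
    unfolding BQ_def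
    by (rule has_derivative_eq_rhs[OF has_derivative_diff[OF
          has_derivative_mult_right[OF sqrt_prod] square_prod]])
      (rule ext, use \<open>fst X0 * snd X0 \<noteq> 0\<close> in \<open>simp add: field_simps\<close>)
qed

lemma BQ_at_gap_sqrt_coordinates:
  fixes p q p0 q0 Q :: real
  assumes "0 < p" "0 < q" "0 < p0" "0 < q0"
  defines "v \<equiv> p0 * q0"
  shows "BQ_at Q (p0^2, q0^2) (p0^2, q0^2) - BQ_at Q (p0^2, q0^2) (p^2, q^2)
       = (64 * Q powr (3/2) / v - 2 * v^2) * (p * q0 - p0 * q)^2
         + ((p * q)^4 - v^4 - 4 * v^3 * (p * q - v))"
proof -
  define K where "K = Q powr (3/2)"
  have v: "0 < v" "sqrt (p0^2 * q0^2) = v" "p0^2 * q0^2 = v^2"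
    using assms by (simp_all add: real_sqrt_mult power_mult_distrib)
  have u: "sqrt (p^2 * q^2) = p * q"
    using assms by (simp add: real_sqrt_mult)
  have "frechet_derivative (BQ Q) (at (p0^2, q0^2))
      = (\<lambda>h. (64 * K / v - 2 * v^2) * (q0^2 * fst h + p0^2 * snd h))"
    using frechet_derivative_at[OF has_derivative_BQ[of "(p0^2, q0^2)" Q]] v
    by (simp add: K_def)
  moreover have "BQ Q (x, y) = 128 * K * sqrt (x * y) - (x * y)^2" for x y
    by (simp add: BQ_def K_def)
  ultimately show ?thesis
    using assms unfolding BQ_at_def K_def[symmetric]
    by (simp add: u v(2)) (simp add: v_def field_simps power2_eq_square power3_eq_cube power4_eq_xxxx)
qed

lemma fourth_power_tangent_gap:
  fixes u v :: real
  shows "u^4 - v^4 - 4 * v^3 * (u - v) = (u^2 + 2 * u * v + 3 * v^2) * (u - v)^2"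
  by (simp add: algebra_simps power2_eq_square power3_eq_cube power4_eq_xxxx)

lemma square_sum_le: "(x + y)^2 \<le> 2 * x^2 + 2 * (y::real)^2"
proof -
  have "2 * x^2 + 2 * y^2 - (x + y)^2 = (x - y)^2"
    by (simp add: power2_eq_square algebra_simps)
  then show ?thesis
    using zero_le_power2[of "x - y"] by linarith
qed

lemma cross_difference_square_le:
  fixes a b u v Q G :: real
  assumes pos: "0 < a" "0 < b" "0 < u" "0 < v" and ab: "a * b = u * v"
    and uQ: "u^2 \<le> Q" and vQ: "v^2 \<le> Q" and QG: "Q \<le> G"
  shows "(a * u - b * v)^2 \<le> 10 * (G * (a - b)^2 + (u^2 + 2 * u * v + 3 * v^2) * (u - v)^2)"
proof -
  have G: "0 \<le> G"
    using uQ QG zero_le_power2[of u] by linarith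
  have "a * u - b * v = (a - b) * u + b * (u - v)"
    by (simp add: algebra_simps)
  then have split: "(a * u - b * v)^2 \<le> 2 * (u^2 * (a - b)^2) + 2 * (b^2 * (u - v)^2)"
    using square_sum_le[of "(a - b) * u" "b * (u - v)"] by (simp add: power_mult_distrib mult.commute)
  have first: "u^2 * (a - b)^2 \<le> G * (a - b)^2"
    using uQ QG by (intro mult_right_mono) auto
  have second: "b^2 * (u - v)^2 \<le> 4 * (G * (a - b)^2) + 2 * (u * v * (u - v)^2)"
  proof (cases "b \<le> 2 * a")
    case True
    then have "b^2 \<le> 2 * (u * v)"
      using pos by (simp flip: ab add: power2_eq_square)
    then have "b^2 * (u - v)^2 \<le> 2 * (u * v) * (u - v)^2"
      by (intro mult_right_mono) auto
    moreover have "0 \<le> G * (a - b)^2"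
      using G by simp
    ultimately show ?thesis
      by simp
  next
    case False
    then have "b^2 \<le> (2 * (b - a))^2"
      using pos by (intro power_mono) auto
    then have "b^2 \<le> 4 * (a - b)^2"
      by (simp only: power_mult_distrib power2_commute[of a b]) simp
    moreover have "(u - v)^2 \<le> G"
    proof (cases "v \<le> u")
      case True
      then have "(u - v)^2 \<le> u^2"
        using pos by (intro power_mono) auto
      with uQ QG show ?thesis
        by linarith
    next
      case False
      then have "(v - u)^2 \<le> v^2"
        using pos by (intro power_mono) auto
      with vQ QG show ?thesis
        by (simp add: power2_commute[of u v])
    qed
    ultimately have "b^2 * (u - v)^2 \<le> 4 * (a - b)^2 * G"
      by (intro mult_mono) auto
    moreover have "0 \<le> u * v * (u - v)^2"
      using pos by simp
    ultimately show ?thesis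
      by (simp add: algebra_simps)
  qed
  have "2 * u * v \<le> u^2 + 2 * u * v + 3 * v^2"
    by simp
  then have "2 * u * v * (u - v)^2 \<le> (u^2 + 2 * u * v + 3 * v^2) * (u - v)^2"
    by (rule mult_right_mono) simp
  then have "2 * (u * v * (u - v)^2) \<le> (u^2 + 2 * u * v + 3 * v^2) * (u - v)^2"
    by (simp only: mult.assoc)
  moreover have "0 \<le> (u^2 + 2 * u * v + 3 * v^2) * (u - v)^2"
    using pos by simp
  ultimately show ?thesis
    using split first second by argo
qed

lemma BQ_slope_lower_bound:
  fixes v Q :: real
  assumes "0 < v" "v^2 \<le> Q"
  shows "62 * Q \<le> 64 * Q powr (3/2) / v - 2 * v^2"
proof -
  have "0 \<le> Q"
    using assms(2) zero_le_power2[of v] by linarith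
  moreover have "v \<le> sqrt Q"
    using assms(2) by (rule real_le_rsqrt)
  ultimately have "Q * v \<le> Q powr (3/2)"
    by (simp add: powr_three_halves power3_eq_cube mult_left_mono)
  then have "Q \<le> Q powr (3/2) / v"
    using assms(1) by (simp add: field_simps)
  then show ?thesis
    using assms(2) by linarith
qed

lemma BQ_at_gap_lower_bound:
  assumes X0: "X0 \<in> OmegaQ Q" and X: "X \<in> OmegaQ Q"
  shows "(fst X - fst X0)^2 * snd X * snd X0 \<le> 10 * (BQ_at Q X0 X0 - BQ_at Q X0 X)"
proof -
  obtain p q where pq: "0 < p" "0 < q" "X = (p^2, q^2)" "(p * q)^2 \<le> Q"
    using X unfolding OmegaQ_def
    by (auto intro!: that[of "sqrt (fst X)" "sqrt (snd X)"] simp: power_mult_distrib)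
  obtain p0 q0 where pq0: "0 < p0" "0 < q0" "X0 = (p0^2, q0^2)" "(p0 * q0)^2 \<le> Q"
    using X0 unfolding OmegaQ_def
    by (auto intro!: that[of "sqrt (fst X0)" "sqrt (snd X0)"] simp: power_mult_distrib)
  define u where "u = p * q"
  define v where "v = p0 * q0"
  define G where "G = 64 * Q powr (3/2) / v - 2 * v^2"
  have "62 * Q \<le> G"
    using BQ_slope_lower_bound[of v Q] pq0 by (simp add: G_def v_def)
  moreover have "0 \<le> Q"
    using pq0(4) zero_le_power2[of "p0 * q0"] by linarith
  ultimately have "(p * q0 * u - p0 * q * v)^2
      \<le> 10 * (G * (p * q0 - p0 * q)^2 + (u^2 + 2 * u * v + 3 * v^2) * (u - v)^2)"
    using pq pq0 by (intro cross_difference_square_le) (simp_all add: u_def v_def)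
  moreover have "(p * q0 * u - p0 * q * v)^2 = (fst X - fst X0)^2 * snd X * snd X0"
    by (simp add: pq(3) pq0(3) u_def v_def power2_eq_square algebra_simps)
  moreover have "BQ_at Q X0 X0 - BQ_at Q X0 X
      = G * (p * q0 - p0 * q)^2 + (u^2 + 2 * u * v + 3 * v^2) * (u - v)^2"
    unfolding pq(3) pq0(3) BQ_at_gap_sqrt_coordinates[OF pq(1,2) pq0(1,2)]
    by (simp add: G_def u_def v_def fourth_power_tangent_gap)
  ultimately show ?thesis
    by simp
qed

theorem lemma5p3:
  shows "(\<forall>Q::real. Q \<ge> 1 \<longrightarrow> (\<forall>X \<in> OmegaQ Q. 0 \<le> BQ Q X \<and> BQ Q X \<le> 128 * Q^2))
    \<and> (\<exists>c::real. c > 0 \<and> (\<forall>Q::real. Q \<ge> 1 \<longrightarrow>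
         (\<forall>X0 \<in> OmegaQ Q. \<forall>X \<in> OmegaQ Q.
            BQ_at Q X0 X0 - BQ_at Q X0 X \<ge> c * \<bar>fst X - fst X0\<bar>^2 * snd X * snd X0)))"
proof (intro conjI exI[of _ "1/10"] allI impI ballI)
  fix Q :: real and X0 X
  assume "X0 \<in> OmegaQ Q" "X \<in> OmegaQ Q"
  from BQ_at_gap_lower_bound[OF this]
  show "1/10 * \<bar>fst X - fst X0\<bar>^2 * snd X * snd X0 \<le> BQ_at Q X0 X0 - BQ_at Q X0 X"
    by simp
qed (simp_all add: BQ_nonneg BQ_le)

end
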